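(* Let $\mathbf{a}_1,\mathbf{a}_2\in G(t)$ with $\mathbf{a}_1\mathbf{a}_2\neq\mathbf{a}_2\mathbf{a}_1$. Then for any $t_{13},t_{23}\in\mathbb{C}$ with $t_{13}\notin\{t_{23},\,t^2-t_{23}\}$, there exists $\mathbf{a}_3\in G(t)$ such that $\mathrm{tr}(\mathbf{a}_1\mathbf{a}_3)=t_{13}$ and $\mathrm{tr}(\mathbf{a}_2\mathbf{a}_3)=t_{23}$.
   Context: $G=\mathrm{SL}(2,\mathbb{C})$ and, for $t\in\mathbb{C}$, $G(t)=\{\mathbf{x}\in G:\mathrm{tr}(\mathbf{x})=t\}$. *)

theory Defs
  imports "HOL-Analysis.Analysis"
begin

type_synonym cmat2 = "complex ^ 2 ^ 2"

definition tr :: "cmat2 \<Rightarrow> complex" where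
  "tr A = (\<Sum>i\<in>UNIV. A $ i $ i)"

definition SL2 :: "cmat2 set" where
  "SL2 = {A. det A = 1}"

definition Gt :: "complex \<Rightarrow> cmat2 set" where
  "Gt t = {A \<in> SL2. tr A = t}"

end

theory Submission
  imports Defs
begin

(*
  Let C = a1 a2 - a2 a1, which is non-zero. By cyclicity of the trace, tr C = tr (a1 C) = tr (a2 C) = 0,
  so whenever X satisfies the linear conditions tr X = t, tr (a1 X) = t13, tr (a2 X) = t23, so does every
  X + s C; such an X exists because these three linear forms are independent when a1 and a2 do not
  commute. Along the line, det (X + s C) = det X - s tr (X C) + s^2 det C, which takes the value 1 for some
  s unless det C = 0 = tr (X C). In that degenerate case U = a1 - a2 and R = a1 + a2 - t are traceless,
  trace-orthogonal and satisfy [U, R] = 2 C, so the identity det [U, R] = 4 det U det R makes U or R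
  nilpotent. A nilpotent one is then proportional to C, hence trace-orthogonal to X, which gives
  t13 = t23 or t13 + t23 = t^2.
*)

lemma mat_mult_component: "(mat c ** A) $ i $ j = c * A $ i $ j"
  for A :: "'a::comm_semiring_1^'n^'m"
proof -
  have "(mat c ** A) $ i $ j = (\<Sum>k\<in>UNIV. if i = k then c * A $ k $ j else 0)"
    unfolding matrix_matrix_mult_def mat_def vec_lambda_beta by (rule sum.cong) auto
  then show ?thesis
    by simp
qed

lemma matrix_diff_ldistrib: "A ** (B - C) = A ** B - A ** C"
  for A :: "'a::comm_ring_1^'n^'m"
  by (simp add: vec_eq_iff matrix_matrix_mult_def right_diff_distrib sum_subtractf)

lemma trace_mat: "trace (mat c :: 'a::comm_semiring_1^'n^'n) = of_nat CARD('n) * c"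
  by (simp add: trace_def mat_def)

lemma trace_mult_mat: "trace (A ** mat c) = c * trace A"
  for A :: "'a::comm_semiring_1^'n^'n"
proof -
  have "trace (A ** mat c) = trace (mat c ** A)"
    by (rule trace_mul_sym)
  then show ?thesis
    by (simp add: trace_def mat_mult_component sum_distrib_left)
qed

lemma trace_mult_scalar_mult: "trace (A ** (mat c ** B)) = c * trace (A ** B)"
  for A :: "'a::comm_semiring_1^'n^'n"
proof -
  have "trace (A ** (mat c ** B)) = trace (B ** A ** mat c)"
    using trace_mul_sym[of "A ** mat c" B] by (simp add: matrix_mul_assoc)
  also have "\<dots> = c * trace (B ** A)"
    by (rule trace_mult_mat)
  finally show ?thesis
    by (simp add: trace_mul_sym[of B])
qed

lemma trace_scalar_mult: "trace (mat c ** A) = c * trace A"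
  for A :: "'a::comm_semiring_1^'n^'n"
  using trace_mult_scalar_mult[of "mat 1"] by simp

lemma trace_mult_uminus: "trace (A ** - B) = - trace (A ** B)"
  for A :: "'a::comm_ring_1^'n^'n"
  by (simp add: trace_def matrix_matrix_mult_def sum_negf vector_uminus_component)

definition commutator :: "'a::comm_ring_1^'n^'n \<Rightarrow> 'a^'n^'n \<Rightarrow> 'a^'n^'n" where
  "commutator A B = A ** B - B ** A"

lemma commutator_self: "commutator A A = 0"
  by (simp add: commutator_def)

lemma commutator_swap: "commutator B A = - commutator A B"
  by (simp add: commutator_def)

lemma commutator_eq_0_iff: "commutator A B = 0 \<longleftrightarrow> A ** B = B ** A"
  by (simp add: commutator_def)

lemma trace_commutator: "trace (commutator A B) = 0"
  by (simp add: commutator_def trace_sub trace_mul_sym[of A B])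

lemma trace_mult_commutator_cycle: "trace (A ** commutator B C) = trace (B ** commutator C A)"
proof -
  have "trace (A ** (B ** C)) = trace (B ** (C ** A))"
    using trace_mul_sym[of A "B ** C"] by (simp add: matrix_mul_assoc)
  moreover have "trace (A ** (C ** B)) = trace (B ** (A ** C))"
    using trace_mul_sym[of "A ** C" B] by (simp add: matrix_mul_assoc)
  ultimately show ?thesis
    by (simp add: commutator_def matrix_diff_ldistrib trace_sub)
qed

lemma trace_mult_commutator_right: "trace (B ** commutator A B) = 0"
proof -
  have "trace (B ** commutator A B) = trace (A ** commutator B B)"
    by (rule trace_mult_commutator_cycle)
  then show ?thesis
    by (simp add: commutator_self trace_def matrix_matrix_mult_def)
qed

lemma trace_mult_commutator_left: "trace (A ** commutator A B) = 0"
proof -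
  have "trace (A ** commutator A B) = trace (A ** commutator B A)"
    by (rule trace_mult_commutator_cycle)
  also have "\<dots> = trace (B ** commutator A A)"
    by (rule trace_mult_commutator_cycle)
  finally show ?thesis
    by (simp add: commutator_self trace_def matrix_matrix_mult_def)
qed

definition conj_transpose :: "complex^'n^'m \<Rightarrow> complex^'m^'n" where
  "conj_transpose A = (\<chi> i j. cnj (A $ j $ i))"

lemma trace_mult_conj_transpose:
  "trace (A ** conj_transpose A) = of_real (\<Sum>i\<in>UNIV. \<Sum>j\<in>UNIV. (cmod (A $ i $ j))\<^sup>2)"
proof -
  have "trace (A ** conj_transpose A) = (\<Sum>i\<in>UNIV. \<Sum>j\<in>UNIV. A $ i $ j * cnj (A $ i $ j))"
    by (simp add: trace_def matrix_matrix_mult_def conj_transpose_def)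
  then show ?thesis
    by (simp only: of_real_sum complex_norm_square)
qed

lemma trace_mult_conj_transpose_eq_0_iff: "trace (A ** conj_transpose A) = 0 \<longleftrightarrow> A = 0"
proof -
  have "trace (A ** conj_transpose A) = 0 \<longleftrightarrow> (\<Sum>i\<in>UNIV. \<Sum>j\<in>UNIV. (cmod (A $ i $ j))\<^sup>2) = 0"
    by (simp only: trace_mult_conj_transpose of_real_eq_0_iff)
  then show ?thesis
    by (simp add: sum_nonneg sum_nonneg_eq_0_iff vec_eq_iff)
qed

lemma exists_traceless_with_trace_pairings:
  fixes A B :: "complex^'n^'n"
  assumes "commutator A B \<noteq> 0"
  shows "\<exists>Y. trace Y = 0 \<and> trace (A ** Y) = \<alpha> \<and> trace (B ** Y) = \<beta>"
proof -
  define D where "D = conj_transpose (commutator A B)"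
  define \<tau> where "\<tau> = trace (commutator A B ** D)"
  have "\<tau> \<noteq> 0"
    using assms by (simp add: \<tau>_def D_def trace_mult_conj_transpose_eq_0_iff)
  have "trace (A ** commutator B D) = trace (B ** commutator D A)"
    by (rule trace_mult_commutator_cycle)
  moreover have "trace (B ** commutator D A) = trace (D ** commutator A B)"
    by (rule trace_mult_commutator_cycle)
  moreover have "trace (D ** commutator A B) = \<tau>"
    unfolding \<tau>_def by (rule trace_mul_sym)
  ultimately have \<tau>: "trace (A ** commutator B D) = \<tau>" "trace (B ** commutator D A) = \<tau>"
    by simp_all
  define Y where "Y = mat (\<alpha> / \<tau>) ** commutator B D + mat (\<beta> / \<tau>) ** commutator D A"
  have "trace Y = 0"
    by (simp add: Y_def trace_add trace_scalar_mult trace_commutator)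
  moreover have "trace (A ** Y) = \<alpha>" "trace (B ** Y) = \<beta>"
    using \<open>\<tau> \<noteq> 0\<close> \<tau>
    by (simp_all add: Y_def matrix_add_ldistrib trace_add trace_mult_scalar_mult
        trace_mult_commutator_left trace_mult_commutator_right)
  ultimately show ?thesis
    by blast
qed

lemma exists_trace_pairings:
  fixes A B :: "complex^'n^'n"
  assumes "commutator A B \<noteq> 0"
  shows "\<exists>X. trace X = \<tau> \<and> trace (A ** X) = \<alpha> \<and> trace (B ** X) = \<beta>"
proof -
  define c where "c = \<tau> / of_nat CARD('n)"
  obtain Y where "trace Y = 0" "trace (A ** Y) = \<alpha> - c * trace A" "trace (B ** Y) = \<beta> - c * trace B"
    using exists_traceless_with_trace_pairings[OF assms] by blast
  then show ?thesis
    by (intro exI[of _ "mat c + Y"]) (simp add: matrix_add_ldistrib trace_add trace_mat trace_mult_mat c_def)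
qed

lemma trace_2: "trace A = A $ 1 $ 1 + A $ 2 $ 2"
  for A :: "'a::comm_semiring_1^2^2"
  by (simp add: trace_def sum_2)

lemma matrix_mult_2_component: "(A ** B) $ i $ j = A $ i $ 1 * B $ 1 $ j + A $ i $ 2 * B $ 2 $ j"
  for A B :: "'a::comm_semiring_1^2^2"
  by (simp add: matrix_matrix_mult_def sum_2)

lemma det_add_scalar_mult_2:
  fixes X C :: "'a::comm_ring_1^2^2"
  shows "det (X + mat s ** C) = det X + s * (trace X * trace C - trace (X ** C)) + s\<^sup>2 * det C"
  by (simp add: det_2 trace_2 mat_mult_component)
    (simp add: matrix_mult_2_component algebra_simps power2_eq_square)

lemma trace_square_2: "trace (A ** A) = (trace A)\<^sup>2 - 2 * det A"
  for A :: "'a::comm_ring_1^2^2"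
  by (simp add: trace_2 det_2 matrix_mult_2_component power2_eq_square algebra_simps)

lemma det_commutator_traceless_2:
  fixes U R :: "'a::comm_ring_1^2^2"
  assumes "trace U = 0" "trace R = 0"
  shows "det (commutator U R) = 4 * det U * det R - (trace (U ** R))\<^sup>2"
proof -
  have "U $ 2 $ 2 = - U $ 1 $ 1" "R $ 2 $ 2 = - R $ 1 $ 1"
    using assms by (simp_all add: trace_2 add_eq_0_iff)
  then show ?thesis
    by (simp add: commutator_def det_2 trace_2 matrix_mult_2_component power2_eq_square algebra_simps)
qed

lemma trace_mult_nilpotent_eq_0:
  fixes U R X :: "'a::field^2^2"
  assumes "trace U = 0" "det U = 0" "trace (U ** R) = 0"
    and "commutator U R \<noteq> 0" "trace (X ** commutator U R) = 0"
  shows "trace (X ** U) = 0"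
proof -
  have "U $ 2 $ 2 = - U $ 1 $ 1"
    using assms(1) by (simp add: trace_2 add_eq_0_iff)
  \<comment> \<open>U and [U, R] are proportional\<close>
  then have "\<forall>i j. commutator U R $ i $ j * trace (X ** U) = U $ i $ j * trace (X ** commutator U R)"
    using assms(2,3) unfolding forall_2
    by (simp add: commutator_def det_2 trace_2 matrix_mult_2_component; safe; algebra)
  moreover obtain i j where "commutator U R $ i $ j \<noteq> 0"
    using assms(4) by (auto simp: vec_eq_iff)
  ultimately show ?thesis
    using assms(5) by (metis mult_eq_0_iff mult_zero_right)
qed

lemma complex_quadratic_has_root:
  fixes a b c :: complex
  assumes "a \<noteq> 0 \<or> b \<noteq> 0"
  shows "\<exists>s. a * s\<^sup>2 + b * s + c = 0"
proof (cases "a = 0")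
  case True
  with assms show ?thesis
    by (intro exI[of _ "- c / b"]) simp
next
  case False
  define r where "r = csqrt (b\<^sup>2 - 4 * a * c)"
  have "a * ((r - b) / (2 * a))\<^sup>2 + b * ((r - b) / (2 * a)) + c = (r\<^sup>2 - (b\<^sup>2 - 4 * a * c)) / (4 * a)"
    using False by (simp add: field_simps power2_eq_square)
  also have "\<dots> = 0"
    by (simp add: r_def)
  finally show ?thesis ..
qed

lemma tr_eq_trace: "tr = trace"
  by (simp add: fun_eq_iff tr_def trace_def)

lemma Gt_iff: "A \<in> Gt t \<longleftrightarrow> trace A = t \<and> det A = 1"
  by (auto simp: Gt_def SL2_def tr_eq_trace)

lemma isotropic_commutator_trace_pairings:
  assumes "a1 \<in> Gt t" "a2 \<in> Gt t"
    and C: "commutator a1 a2 \<noteq> 0" "det (commutator a1 a2) = 0"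
    and X: "tr X = t" "tr (X ** commutator a1 a2) = 0"
  shows "tr (a1 ** X) = tr (a2 ** X) \<or> tr (a1 ** X) + tr (a2 ** X) = t\<^sup>2"
proof -
  let ?C = "commutator a1 a2"
  define U where "U = a1 - a2"
  define R where "R = a1 + a2 - mat t"
  have a: "trace a1 = t" "det a1 = 1" "trace a2 = t" "det a2 = 1"
    using assms(1,2) by (simp_all add: Gt_iff)
  have "trace (U ** R) = trace (a1 ** a1) - trace (a2 ** a2) - t * (trace a1 - trace a2)"
    unfolding U_def R_def by (simp add: trace_2 matrix_mult_2_component mat_def algebra_simps)
  then have UR: "trace U = 0" "trace R = 0" "trace (U ** R) = 0"
    using a by (simp_all add: U_def R_def trace_add trace_sub trace_mat trace_square_2)
  have UR_C: "commutator U R = ?C + ?C"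
    unfolding U_def R_def
    by (simp add: matrix_mult_2_component mat_def commutator_def vec_eq_iff forall_2 algebra_simps)
  have "det U * det R = 0"
  proof -
    have "det (?C + ?C) = 4 * det ?C"
      by (simp add: det_2 algebra_simps)
    then have "4 * (det U * det R) = 0"
      using det_commutator_traceless_2[OF UR(1,2)] UR(3) UR_C C(2) by simp
    then show ?thesis
      by simp
  qed
  have C2: "?C + ?C \<noteq> 0" "trace (X ** (?C + ?C)) = 0"
    using C(1) X(2) unfolding matrix_add_ldistrib trace_add tr_eq_trace by (auto simp: vec_eq_iff)
  consider "det U = 0" | "det R = 0"
    using \<open>det U * det R = 0\<close> by auto
  then show ?thesis
  proof cases
    case 1
    then have "trace (X ** U) = 0"
      using trace_mult_nilpotent_eq_0[of U R X] UR UR_C C2 by simp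
    then show ?thesis
      by (simp add: U_def matrix_diff_ldistrib trace_sub tr_eq_trace trace_mul_sym[of X])
  next
    case 2
    have "commutator R U = - (?C + ?C)"
      using UR_C commutator_swap by metis
    then have "trace (X ** R) = 0"
      using trace_mult_nilpotent_eq_0[of R U X] 2 UR C2 by (simp add: trace_mul_sym[of R] trace_mult_uminus)
    moreover have "trace (X ** R) = trace (a1 ** X) + trace (a2 ** X) - t * trace X"
      by (simp add: R_def matrix_add_ldistrib matrix_diff_ldistrib trace_add trace_sub trace_mult_mat
          trace_mul_sym[of X])
    ultimately show ?thesis
      using X(1) by (simp add: tr_eq_trace power2_eq_square)
  qed
qed

theorem mainTheorem2:
  fixes t t13 t23 :: complex and a1 a2 :: cmat2
  assumes "a1 \<in> Gt t" and "a2 \<in> Gt t"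
    and "a1 ** a2 \<noteq> a2 ** a1"
    and "t13 \<noteq> t23" and "t13 \<noteq> t^2 - t23"
  shows "\<exists>a3 \<in> Gt t. tr (a1 ** a3) = t13 \<and> tr (a2 ** a3) = t23"
proof -
  let ?C = "commutator a1 a2"
  have "?C \<noteq> 0"
    using assms(3) by (simp add: commutator_eq_0_iff)
  then obtain X where X: "tr X = t" "tr (a1 ** X) = t13" "tr (a2 ** X) = t23"
    unfolding tr_eq_trace using exists_trace_pairings by blast
  have "det ?C \<noteq> 0 \<or> tr (X ** ?C) \<noteq> 0"
    using isotropic_commutator_trace_pairings[OF assms(1,2) \<open>?C \<noteq> 0\<close> _ X(1)] X(2,3) assms(4,5)
    by (auto simp: eq_diff_eq)
  then obtain s where s: "det ?C * s\<^sup>2 + (- tr (X ** ?C)) * s + (det X - 1) = 0"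
    using complex_quadratic_has_root by (metis neg_equal_0_iff_equal)
  define a3 where "a3 = X + mat s ** ?C"
  have "det a3 = 1"
    using s by (simp add: a3_def det_add_scalar_mult_2 trace_commutator tr_eq_trace algebra_simps)
  moreover have "tr a3 = t" "tr (a1 ** a3) = t13" "tr (a2 ** a3) = t23"
    using X by (simp_all add: a3_def tr_eq_trace matrix_add_ldistrib trace_add trace_scalar_mult
        trace_commutator trace_mult_scalar_mult trace_mult_commutator_left trace_mult_commutator_right)
  ultimately show ?thesis
    by (auto simp: Gt_iff tr_eq_trace)
qed

end
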